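(* Let $X$ be a semigroup and $S$ be one of the semigroups $\beta(X),\lambda(X),\varphi(X),N_2(X),\upsilon(X)$. If $S$ is regular, then for every subsemigroup $Z\subset X$ whose complement $X\setminus Z$ is an ideal in $X$, the semigroup $S\cap\upsilon(Z)$ is regular.
   Context: An upfamily on a set $X$ is a family of nonempty subsets of $X$ closed under taking supersets in $X$; $\upsilon(X)$ is the set of all upfamilies. $N_2(X)$, $\lambda(X)$, $\varphi(X)$, $\beta(X)$ are the sets of linked upfamilies (any two members intersect), maximal linked upfamilies, filters, and ultrafilters on $X$. The operation is $\mathcal A*\mathcal B=\big\langle \bigcup_{a\in A} a*B_a : A\in\mathcal A,\ \{B_a\}_{a\in A}\subset\mathcal B\big\rangle$, where $\langle\mathcal C\rangle=\{A\subset X:\exists C\in\mathcal C,\ C\subset A\}$; all these sets are subsemigroups of $\upsilon(X)$. For $Z\subset X$, $\upsilon(Z)$ is identified with the subset of $\upsilon(X)$ consisting of the upfamilies $\{A\subset X: A\cap Z\in\mathcal F\}$, $\mathcal F\in\upsilon(Z)$. A semigroup $S$ is regular if $x\in xSx$ for every $x\in S$. A nonempty $I\subset X$ is an ideal if $XI\cup IX\subset I$. *)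

theory Defs
  imports Main
begin

text \<open>The semigroup X is the whole carrier of a type of class semigroup_mult.\<close>

definition upfamily :: "'a set set \<Rightarrow> bool" where
  "upfamily \<A> \<longleftrightarrow> (\<forall>A\<in>\<A>. A \<noteq> {}) \<and> (\<forall>A\<in>\<A>. \<forall>B. A \<subseteq> B \<longrightarrow> B \<in> \<A>)"

definition ups :: "'a set set set" where
  "ups = {\<A>. upfamily \<A>}"

definition linked :: "'a set set \<Rightarrow> bool" where
  "linked \<A> \<longleftrightarrow> (\<forall>A\<in>\<A>. \<forall>B\<in>\<A>. A \<inter> B \<noteq> {})"

definition N2 :: "'a set set set" where
  "N2 = {\<A>. upfamily \<A> \<and> linked \<A>}"

definition lam :: "'a set set set" where
  "lam = {\<A>. \<A> \<in> N2 \<and> (\<forall>\<B>\<in>N2. \<A> \<subseteq> \<B> \<longrightarrow> \<B> = \<A>)}"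

definition is_filter_up :: "'a set set \<Rightarrow> bool" where
  "is_filter_up \<A> \<longleftrightarrow> upfamily \<A> \<and> (\<forall>A\<in>\<A>. \<forall>B\<in>\<A>. A \<inter> B \<in> \<A>)"

definition phi :: "'a set set set" where
  "phi = {\<A>. is_filter_up \<A>}"

definition bet :: "'a set set set" where
  "bet = {\<A>. \<A> \<in> phi \<and> (\<forall>\<B>\<in>phi. \<A> \<subseteq> \<B> \<longrightarrow> \<B> = \<A>)}"

definition up_mult :: "'a::semigroup_mult set set \<Rightarrow> 'a set set \<Rightarrow> 'a set set" where
  "up_mult \<A> \<B> = {C. \<exists>A\<in>\<A>. \<exists>f. (\<forall>a\<in>A. f a \<in> \<B>) \<and>
       (\<Union>a\<in>A. (\<lambda>b. a * b) ` f a) \<subseteq> C}"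

definition regular_sub :: "'a::semigroup_mult set set set \<Rightarrow> bool" where
  "regular_sub S \<longleftrightarrow> (\<forall>x\<in>S. \<exists>y\<in>S. x = up_mult (up_mult x y) x)"

text \<open>Upfamilies on a subset Z, and their identification with upfamilies on X.\<close>
definition upfamily_on :: "'a set \<Rightarrow> 'a set set \<Rightarrow> bool" where
  "upfamily_on Z \<F> \<longleftrightarrow> \<F> \<subseteq> Pow Z \<and> (\<forall>A\<in>\<F>. A \<noteq> {}) \<and>
     (\<forall>A\<in>\<F>. \<forall>B. A \<subseteq> B \<and> B \<subseteq> Z \<longrightarrow> B \<in> \<F>)"

definition ups_sub :: "'a set \<Rightarrow> 'a set set set" where
  "ups_sub Z = {\<A>. \<exists>\<F>. upfamily_on Z \<F> \<and> \<A> = {A. A \<inter> Z \<in> \<F>}}"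

definition is_ideal :: "'a::semigroup_mult set \<Rightarrow> bool" where
  "is_ideal I \<longleftrightarrow> I \<noteq> {} \<and> (\<forall>x. \<forall>i\<in>I. x * i \<in> I \<and> i * x \<in> I)"

definition subsemigroup :: "'a::semigroup_mult set \<Rightarrow> bool" where
  "subsemigroup Z \<longleftrightarrow> Z \<noteq> {} \<and> (\<forall>x\<in>Z. \<forall>y\<in>Z. x * y \<in> Z)"

end

theory Submission imports Defs begin

(* Let x \<in> S \<inter> \<upsilon>(Z) and x = x*y*x with y \<in> S.  Replace y by its trace
   {A. A \<inter> Z \<in> y} on Z.  Because X \<setminus> Z is an ideal, every product a*b*c landing in Z
   has b \<in> Z, so only the parts of the members of y inside Z matter and still
   x = x*(trace y)*x.  The trace lies in \<upsilon>(Z) and inherits being an upfamily, linked,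
   or a filter; if x is nonempty, so is the trace, and then it contains Z (the empty x
   is its own witness).  For \<beta>(X), a filter containing Z equals its own trace. *)

section \<open>Upfamilies living on a subset\<close>

definition saturated :: "'a set \<Rightarrow> 'a set set \<Rightarrow> bool" where
  "saturated Z H \<longleftrightarrow> (\<forall>A. A \<in> H \<longleftrightarrow> A \<inter> Z \<in> H)"

lemma ups_sub_iff: "H \<in> ups_sub Z \<longleftrightarrow> upfamily H \<and> saturated Z H"
proof
  assume "H \<in> ups_sub Z"
  then obtain F where F: "upfamily_on Z F" and H: "H = {A. A \<inter> Z \<in> F}"
    unfolding ups_sub_def by blast
  have "upfamily H"
    unfolding upfamily_def
  proof (intro conjI ballI allI impI)
    fix A assume "A \<in> H" then show "A \<noteq> {}" using F H unfolding upfamily_on_def by auto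
  next
    fix A B assume "A \<in> H" "A \<subseteq> B"
    then have "A \<inter> Z \<in> F" "A \<inter> Z \<subseteq> B \<inter> Z" using H by auto
    then show "B \<in> H" using F H unfolding upfamily_on_def by blast
  qed
  moreover have "saturated Z H" using H unfolding saturated_def by (simp add: Int_assoc)
  ultimately show "upfamily H \<and> saturated Z H" ..
next
  assume H: "upfamily H \<and> saturated Z H"
  have "upfamily_on Z (H \<inter> Pow Z)"
    using H unfolding upfamily_on_def upfamily_def by blast
  moreover have "H = {A. A \<inter> Z \<in> H \<inter> Pow Z}"
    using H unfolding saturated_def by auto
  ultimately show "H \<in> ups_sub Z" unfolding ups_sub_def by blast
qed

section \<open>The product of upfamilies\<close>

lemma up_mult_iff:
  "C \<in> up_mult x y \<longleftrightarrow> (\<exists>A\<in>x. \<exists>f. (\<forall>a\<in>A. f a \<in> y) \<and> (\<forall>a\<in>A. \<forall>b\<in>f a. a * b \<in> C))"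
  unfolding up_mult_def by (simp add: UN_subset_iff image_subset_iff)

lemma up_multI:
  "A \<in> x \<Longrightarrow> \<forall>a\<in>A. f a \<in> y \<Longrightarrow> \<forall>a\<in>A. \<forall>b\<in>f a. a * b \<in> C \<Longrightarrow> C \<in> up_mult x y"
  unfolding up_mult_iff by blast

lemma up_multE:
  assumes "C \<in> up_mult x y"
  obtains A f where "A \<in> x" "\<forall>a\<in>A. f a \<in> y" "\<forall>a\<in>A. \<forall>b\<in>f a. a * b \<in> C"
  using assms unfolding up_mult_iff by blast

lemma up_mult_mono: "x \<subseteq> x' \<Longrightarrow> y \<subseteq> y' \<Longrightarrow> up_mult x y \<subseteq> up_mult x' y'"
  by (auto simp: up_mult_iff) (meson subsetD)

lemma upfamily_up_mult:
  assumes "upfamily x" "upfamily y" shows "upfamily (up_mult x y)"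
  unfolding upfamily_def
proof (intro conjI ballI allI impI)
  fix C assume "C \<in> up_mult x y"
  then obtain A f where A: "A \<in> x" "\<forall>a\<in>A. f a \<in> y" "\<forall>a\<in>A. \<forall>b\<in>f a. a * b \<in> C"
    unfolding up_mult_iff by blast
  obtain a where a: "a \<in> A" using A(1) assms(1) unfolding upfamily_def by blast
  obtain b where "b \<in> f a" using A(2) a assms(2) unfolding upfamily_def by blast
  then show "C \<noteq> {}" using A(3) a by blast
next
  fix C D assume "C \<in> up_mult x y" "C \<subseteq> D"
  then show "D \<in> up_mult x y" unfolding up_mult_iff by blast
qed

lemma linked_up_mult:
  assumes "linked x" "linked y" shows "linked (up_mult x y)"
  unfolding linked_def
proof (intro ballI)
  fix C1 C2 assume "C1 \<in> up_mult x y" "C2 \<in> up_mult x y"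
  then obtain A1 f1 A2 f2 where
    A: "A1 \<in> x" "\<forall>a\<in>A1. f1 a \<in> y" "\<forall>a\<in>A1. \<forall>b\<in>f1 a. a * b \<in> C1"
       "A2 \<in> x" "\<forall>a\<in>A2. f2 a \<in> y" "\<forall>a\<in>A2. \<forall>b\<in>f2 a. a * b \<in> C2"
    unfolding up_mult_iff by blast
  obtain a where a: "a \<in> A1" "a \<in> A2" using assms(1) A(1,4) unfolding linked_def by blast
  obtain b where "b \<in> f1 a" "b \<in> f2 a" using assms(2) A(2,5) a unfolding linked_def by blast
  then show "C1 \<inter> C2 \<noteq> {}" using A(3,6) a by blast
qed

lemma N2_up_mult: "x \<in> N2 \<Longrightarrow> y \<in> N2 \<Longrightarrow> up_mult x y \<in> N2"
  unfolding N2_def using upfamily_up_mult linked_up_mult by blast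

lemma regular_witness_nonempty:
  assumes "upfamily x" "x \<noteq> {}" "x = up_mult (up_mult x y) x"
  shows "y \<noteq> {}"
proof
  assume "y = {}"
  have "up_mult x y = {}"
  proof (rule equals0I)
    fix C assume "C \<in> up_mult x y"
    then obtain A where "A \<in> x" "A = {}" using \<open>y = {}\<close> by (auto simp: up_mult_iff)
    then show False using assms(1) unfolding upfamily_def by blast
  qed
  then have "up_mult (up_mult x y) x = {}" by (simp add: up_mult_def)
  with assms(2,3) show False by simp
qed

section \<open>The trace of an upfamily on Z\<close>

definition trace :: "'a set \<Rightarrow> 'a set set \<Rightarrow> 'a set set" where
  "trace Z y = {A. A \<inter> Z \<in> y}"

lemma trace_subset: "upfamily y \<Longrightarrow> trace Z y \<subseteq> y"
  unfolding trace_def upfamily_def by (auto intro: Int_lower1)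

lemma trace_ups_sub: "upfamily y \<Longrightarrow> trace Z y \<in> ups_sub Z"
  unfolding ups_sub_iff saturated_def trace_def upfamily_def
  by (auto simp: Int_assoc) (meson Int_mono order_refl)

lemma trace_ups: "upfamily y \<Longrightarrow> trace Z y \<in> ups"
  using trace_ups_sub unfolding ups_sub_iff ups_def by blast

lemma trace_N2: "y \<in> N2 \<Longrightarrow> trace Z y \<in> N2"
proof -
  assume "y \<in> N2"
  then have up: "upfamily y" and "linked y" unfolding N2_def by auto
  then have "linked (trace Z y)" using trace_subset[OF up] unfolding linked_def by blast
  moreover have "upfamily (trace Z y)" using trace_ups_sub[OF up] by (simp add: ups_sub_iff)
  ultimately show ?thesis unfolding N2_def by blast
qed

lemma trace_phi: "y \<in> phi \<Longrightarrow> trace Z y \<in> phi"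
proof -
  assume y: "y \<in> phi"
  then have "upfamily y" unfolding phi_def is_filter_up_def by blast
  moreover have "A \<inter> B \<in> trace Z y" if "A \<in> trace Z y" "B \<in> trace Z y" for A B
  proof -
    have "(A \<inter> Z) \<inter> (B \<inter> Z) \<in> y"
      using that y unfolding trace_def phi_def is_filter_up_def by blast
    then show ?thesis unfolding trace_def by (simp add: Int_ac)
  qed
  ultimately show "trace Z y \<in> phi"
    using trace_ups_sub unfolding phi_def is_filter_up_def ups_sub_iff by blast
qed

lemma trace_filter_eq: "is_filter_up y \<Longrightarrow> Z \<in> y \<Longrightarrow> trace Z y = y"
  unfolding trace_def is_filter_up_def upfamily_def by blast

lemma Z_in_trace: "upfamily y \<Longrightarrow> trace Z y \<noteq> {} \<Longrightarrow> Z \<in> trace Z y"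
  unfolding trace_def upfamily_def by auto

text \<open>In a product \<open>a*b*c \<in> Z\<close> the middle factor b
  must lie in Z, so only the parts of the members of y inside Z are ever used.\<close>
lemma regular_trace:
  assumes x: "x \<in> ups_sub Z" and ideal: "is_ideal (- Z)" and y: "upfamily y"
    and eq: "x = up_mult (up_mult x y) x"
  shows "x = up_mult (up_mult x (trace Z y)) x"
proof
  have sat: "saturated Z x" and xne: "\<forall>A\<in>x. A \<noteq> {}"
    using x unfolding ups_sub_iff upfamily_def by auto
  have out: "u * i \<notin> Z" "i * u \<notin> Z" if "i \<notin> Z" for u i
    using ideal that unfolding is_ideal_def by auto
  show "x \<subseteq> up_mult (up_mult x (trace Z y)) x"
  proof
    fix D assume "D \<in> x"
    then have "D \<inter> Z \<in> x" using sat unfolding saturated_def by blast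
    then have "D \<inter> Z \<in> up_mult (up_mult x y) x" unfolding eq[symmetric] .
    then obtain E g where E: "E \<in> up_mult x y" "\<forall>e\<in>E. g e \<in> x"
        "\<forall>e\<in>E. \<forall>c\<in>g e. e * c \<in> D \<inter> Z"
      by (rule up_multE)
    from E(1) obtain A f where A: "A \<in> x" "\<forall>a\<in>A. f a \<in> y" "\<forall>a\<in>A. \<forall>b\<in>f a. a * b \<in> E"
      by (rule up_multE)
    have inside: "f a \<subseteq> Z" if "a \<in> A" for a
    proof
      fix b assume b: "b \<in> f a"
      then have ab: "a * b \<in> E" using A(3) that by blast
      then obtain c where "c \<in> g (a * b)" using E(2) xne by blast
      then have "a * b * c \<in> Z" using E(3) ab by blast
      then show "b \<in> Z" using out by blast
    qed
    have "\<forall>a\<in>A. f a \<in> trace Z y"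
    proof
      fix a assume "a \<in> A"
      then have "f a \<inter> Z = f a" using inside by blast
      then show "f a \<in> trace Z y" using A(2) \<open>a \<in> A\<close> unfolding trace_def by simp
    qed
    with A(1) have E': "E \<in> up_mult x (trace Z y)" using A(3) by (rule up_multI)
    have "\<forall>e\<in>E. \<forall>c\<in>g e. e * c \<in> D" using E(3) by blast
    with E' E(2) show "D \<in> up_mult (up_mult x (trace Z y)) x" by (rule up_multI)
  qed
  have "up_mult (up_mult x (trace Z y)) x \<subseteq> up_mult (up_mult x y) x"
    by (intro up_mult_mono order_refl trace_subset y)
  then show "up_mult (up_mult x (trace Z y)) x \<subseteq> x" unfolding eq[symmetric] .
qed

section \<open>Maximal linked upfamilies on Z\<close>

lemma saturated_Union: "\<forall>G\<in>C. saturated Z G \<Longrightarrow> saturated Z (\<Union>C)"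
  unfolding saturated_def Union_iff by blast

lemma N2_chain_Union:
  assumes "C \<in> chains N2" shows "\<Union>C \<in> N2"
proof -
  have CN: "\<forall>G\<in>C. upfamily G \<and> linked G" and ch: "\<forall>G\<in>C. \<forall>H\<in>C. G \<subseteq> H \<or> H \<subseteq> G"
    using assms unfolding chains_def chain_subset_def N2_def by auto
  have "upfamily (\<Union>C)"
    unfolding upfamily_def
  proof (intro conjI ballI allI impI)
    fix A assume "A \<in> \<Union>C"
    then obtain G where "G \<in> C" "A \<in> G" by blast
    then show "A \<noteq> {}" using CN unfolding upfamily_def by blast
  next
    fix A B assume "A \<in> \<Union>C" "A \<subseteq> B"
    then obtain G where G: "G \<in> C" "A \<in> G" by blast
    then have "B \<in> G" using CN \<open>A \<subseteq> B\<close> unfolding upfamily_def by blast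
    then show "B \<in> \<Union>C" using G(1) by blast
  qed
  moreover have "linked (\<Union>C)"
    unfolding linked_def
  proof (intro ballI)
    fix A B assume "A \<in> \<Union>C" "B \<in> \<Union>C"
    then obtain G H where GH: "G \<in> C" "H \<in> C" "A \<in> G" "B \<in> H" by blast
    have "G \<subseteq> H \<or> H \<subseteq> G" using ch GH(1,2) by blast
    then obtain K where "K \<in> C" "A \<in> K" "B \<in> K" using GH by blast
    then show "A \<inter> B \<noteq> {}" using CN unfolding linked_def by blast
  qed
  ultimately show ?thesis unfolding N2_def by blast
qed

lemma maximal_linked_on_exists:
  assumes y: "y \<in> N2 \<inter> ups_sub Z"
  shows "\<exists>M\<in>N2 \<inter> ups_sub Z. y \<subseteq> M \<and> (\<forall>G\<in>N2 \<inter> ups_sub Z. M \<subseteq> G \<longrightarrow> G = M)"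
proof -
  define P where "P = {G \<in> N2 \<inter> ups_sub Z. y \<subseteq> G}"
  have "\<exists>U\<in>P. \<forall>G\<in>C. G \<subseteq> U" if C: "C \<in> chains P" for C
  proof (cases "C = {}")
    case True then show ?thesis using y unfolding P_def by blast
  next
    case False
    have CP: "C \<subseteq> P" and "chain\<^sub>\<subseteq> C" using C unfolding chains_def by auto
    moreover have "P \<subseteq> N2" unfolding P_def by blast
    ultimately have "C \<in> chains N2" unfolding chains_def by blast
    then have N2: "\<Union>C \<in> N2" by (rule N2_chain_Union)
    have "\<forall>G\<in>C. saturated Z G" using CP by (auto simp: P_def ups_sub_iff)
    then have sat: "saturated Z (\<Union>C)" by (rule saturated_Union)
    obtain G where "G \<in> C" using False by blast
    then have "y \<subseteq> \<Union>C" using CP unfolding P_def by blast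
    with N2 sat have "\<Union>C \<in> P" unfolding P_def by (simp add: ups_sub_iff N2_def)
    then show ?thesis by blast
  qed
  then obtain M where "M \<in> P" and max: "\<forall>G\<in>P. M \<subseteq> G \<longrightarrow> G = M"
    using Zorn_Lemma2[of P] by blast
  have "\<forall>G\<in>N2 \<inter> ups_sub Z. M \<subseteq> G \<longrightarrow> G = M"
  proof (intro ballI impI)
    fix G assume "G \<in> N2 \<inter> ups_sub Z" "M \<subseteq> G"
    moreover have "y \<subseteq> M" using \<open>M \<in> P\<close> unfolding P_def by blast
    ultimately have "G \<in> P" unfolding P_def by blast
    then show "G = M" using max \<open>M \<subseteq> G\<close> by blast
  qed
  then show ?thesis using \<open>M \<in> P\<close> unfolding P_def by blast
qed

text \<open>A nonempty maximal linked upfamily on Z is maximal among all linked upfamilies: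
  any member A of a linked extension G meets Z in a set whose up-closure can be
  adjoined to M without destroying linkedness.\<close>
lemma maximal_linked_on_lam:
  assumes M: "M \<in> N2 \<inter> ups_sub Z" "M \<noteq> {}"
    and max: "\<forall>G\<in>N2 \<inter> ups_sub Z. M \<subseteq> G \<longrightarrow> G = M"
  shows "M \<in> lam"
  unfolding lam_def
proof (intro CollectI conjI ballI impI)
  show "M \<in> N2" using M by blast
  have sat: "saturated Z M" and up: "upfamily M" and lM: "linked M"
    using M by (auto simp: ups_sub_iff N2_def)
  fix G assume G: "G \<in> N2" "M \<subseteq> G"
  have lG: "linked G" using G unfolding N2_def by blast
  have "A \<in> M" if A: "A \<in> G" for A
  proof -
    define H where "H = M \<union> {B. A \<inter> Z \<subseteq> B}"
    have meets: "A \<inter> Z \<inter> D \<noteq> {}" if "D \<in> M" for D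
    proof -
      have "D \<inter> Z \<in> G" using sat that G(2) unfolding saturated_def by blast
      then have "A \<inter> (D \<inter> Z) \<noteq> {}" using lG A unfolding linked_def by blast
      then show ?thesis by blast
    qed
    then have AZ: "A \<inter> Z \<noteq> {}" using M(2) by blast
    have "upfamily H"
      unfolding upfamily_def
    proof (intro conjI ballI allI impI)
      fix B assume "B \<in> H"
      then show "B \<noteq> {}" using up AZ unfolding H_def upfamily_def by auto
    next
      fix B B' assume "B \<in> H" "B \<subseteq> B'"
      then show "B' \<in> H" using up unfolding H_def upfamily_def by blast
    qed
    moreover have "linked H"
      unfolding linked_def
    proof (intro ballI)
      have mixed: "B1 \<inter> B2 \<noteq> {}" if "B1 \<in> M" "A \<inter> Z \<subseteq> B2" for B1 B2
        using meets[OF that(1)] that(2) by blast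
      fix B1 B2 assume "B1 \<in> H" "B2 \<in> H"
      then consider "B1 \<in> M" "B2 \<in> M" | "B1 \<in> M" "A \<inter> Z \<subseteq> B2" | "A \<inter> Z \<subseteq> B1" "B2 \<in> M"
        | "A \<inter> Z \<subseteq> B1" "A \<inter> Z \<subseteq> B2"
        unfolding H_def by blast
      then show "B1 \<inter> B2 \<noteq> {}"
      proof cases
        case 1 then show ?thesis using lM unfolding linked_def by blast
      next
        case 2 then show ?thesis by (rule mixed)
      next
        case 3 then show ?thesis using mixed[of B2 B1] by blast
      next
        case 4 then show ?thesis using AZ by blast
      qed
    qed
    moreover have "saturated Z H"
      using sat unfolding H_def saturated_def by auto
    ultimately have "H \<in> N2 \<inter> ups_sub Z" by (simp add: N2_def ups_sub_iff)
    moreover have "M \<subseteq> H" unfolding H_def by blast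
    ultimately have "H = M" using max by blast
    then have "A \<inter> Z \<in> M" unfolding H_def by blast
    then show "A \<in> M" using sat unfolding saturated_def by blast
  qed
  then show "G = M" using G(2) by blast
qed

text \<open>For a maximal linked x, a linked solution w of \<open>x = x*w*x\<close> may be enlarged to
  any linked M above it: \<open>x \<subseteq> x*M*x\<close> is linked, hence equal to x.\<close>
lemma lam_regular_enlarge:
  assumes x: "x \<in> lam" and M: "M \<in> N2" "w \<subseteq> M" and eq: "x = up_mult (up_mult x w) x"
  shows "x = up_mult (up_mult x M) x"
proof -
  have "x = up_mult (up_mult x w) x" by (rule eq)
  also have "\<dots> \<subseteq> up_mult (up_mult x M) x" by (intro up_mult_mono order_refl M(2))
  finally have "x \<subseteq> up_mult (up_mult x M) x" .
  moreover have "x \<in> N2" using x unfolding lam_def by blast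
  then have "up_mult (up_mult x M) x \<in> N2" using M(1) by (simp add: N2_up_mult)
  ultimately show ?thesis using x unfolding lam_def by blast
qed

lemma upfamily_of_S:
  "S \<in> {bet, lam, phi, N2, ups} \<Longrightarrow> G \<in> S \<Longrightarrow> upfamily G"
  unfolding bet_def lam_def phi_def N2_def ups_def is_filter_up_def by blast

lemma trace_in_class:
  assumes "S \<in> {bet, phi, N2, ups}" "y \<in> S" "Z \<in> trace Z y"
  shows "trace Z y \<in> S"
proof -
  have up: "upfamily y" using upfamily_of_S[of S y] assms(1,2) by blast
  from assms(1) consider "S = bet" | "S = phi" | "S = N2" | "S = ups" by blast
  then show ?thesis
  proof cases
    case 1
    then have "is_filter_up y" using assms(2) unfolding bet_def phi_def by blast
    moreover have "Z \<in> y" using assms(3) trace_subset[OF up] by blast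
    ultimately have "trace Z y = y" by (rule trace_filter_eq)
    then show ?thesis using assms(2) by simp
  qed (use assms(2) up trace_phi trace_N2 trace_ups in auto)
qed

lemma lam_witness_on:
  assumes x: "x \<in> lam" and w: "w \<in> N2 \<inter> ups_sub Z" "Z \<in> w"
    and eq: "x = up_mult (up_mult x w) x"
  shows "\<exists>M\<in>lam \<inter> ups_sub Z. x = up_mult (up_mult x M) x"
proof -
  obtain M where M: "M \<in> N2 \<inter> ups_sub Z" "w \<subseteq> M"
    and max: "\<forall>G\<in>N2 \<inter> ups_sub Z. M \<subseteq> G \<longrightarrow> G = M"
    using maximal_linked_on_exists[OF w(1)] by blast
  have "M \<noteq> {}" using w(2) M(2) by blast
  then have "M \<in> lam" using M(1) max by (intro maximal_linked_on_lam)
  moreover have "x = up_mult (up_mult x M) x"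
    using lam_regular_enlarge[OF x _ M(2) eq] M(1) by blast
  ultimately show ?thesis using M(1) by blast
qed

theorem corollary3p4:
  fixes S :: "'a::semigroup_mult set set set" and Z :: "'a set"
  assumes "S \<in> {bet, lam, phi, N2, ups}"
    and "regular_sub S"
    and "subsemigroup Z"
    and "is_ideal (- Z)"
  shows "regular_sub (S \<inter> ups_sub Z)"
  unfolding regular_sub_def
proof
  fix x assume x: "x \<in> S \<inter> ups_sub Z"
  obtain y where y: "y \<in> S" and eq: "x = up_mult (up_mult x y) x"
    using assms(2) x unfolding regular_sub_def by blast
  have up: "upfamily x" "upfamily y" using upfamily_of_S[OF assms(1)] x y by auto
  have "x \<in> ups_sub Z" using x by blast
  then have eqw: "x = up_mult (up_mult x (trace Z y)) x" using assms(4) up(2) eq by (rule regular_trace)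
  have w: "trace Z y \<in> ups_sub Z" using up(2) by (rule trace_ups_sub)
  show "\<exists>w\<in>S \<inter> ups_sub Z. x = up_mult (up_mult x w) x"
  proof (cases "x = {}")
    case True
    then have "x = up_mult (up_mult x x) x" by (simp add: up_mult_def)
    from this x show ?thesis by (rule bexI)
  next
    case False
    have "trace Z y \<noteq> {}" using up(1) False eqw by (rule regular_witness_nonempty)
    with up(2) have Zw: "Z \<in> trace Z y" by (rule Z_in_trace)
    show ?thesis
    proof (cases "S = lam")
      case True
      then have "x \<in> lam" "trace Z y \<in> N2" using x y trace_N2 unfolding lam_def by auto
      then show ?thesis using lam_witness_on[of x "trace Z y" Z] w Zw eqw True by blast
    next
      case False
      then have "trace Z y \<in> S" using assms(1) y Zw by (intro trace_in_class) auto
      from eqw IntI[OF this w] show ?thesis by (rule bexI)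
    qed
  qed
qed

end
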